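(* Let $\beta\in(0,\tfrac12)$ and let $\lambda$ be an eigenvalue of $\Delta_\beta$. Then $\lambda\ge\lambda_1(\beta)$.
   Context: Tree: for an integer $m\ge2$, $\mathbb{T}_m$ has vertices the root $\emptyset$ and all finite sequences $(\emptyset,a_1,\dots,a_k)$, $a_i\in\{0,\dots,m-1\}$; $|x|$ is the level, successors of $x$ are $(x,i)$, $\hat x$ is the immediate predecessor of $x\ne\emptyset$. A branch is an infinite sequence $(x_n)_{n\ge0}$ with $x_0=\emptyset$, $x_{n+1}$ a successor of $x_n$; $\lim_{x\to y}u(x)=\lim_n u(x_n)$ for a branch $y=(x_n)$. Operator: $p_\beta=\beta/(1-\beta)$ for $\beta\in(0,1)$. $\Delta_\beta u(\emptyset)=\frac1m\sum_{i=0}^{m-1}u(\emptyset,i)-u(\emptyset)$ and, for $x\ne\emptyset$, $\Delta_\beta u(x)=\big(\beta u(\hat x)+\frac{1-\beta}{m}\sum_{i=0}^{m-1}u(x,i)-u(x)\big)p_\beta^{-|x|}$. Eigenvalues: $\lambda\in\mathbb{R}$ is an eigenvalue of $\Delta_\beta$ if there is a bounded $u\not\equiv0$ with $-\Delta_\beta u=\lambda u$ on $\mathbb{T}_m$ and $\lim_{x\to y}u(x)=0$ for every branch $y$. $\mathcal{A}_\beta=\{\lambda>0:\exists v:\mathbb{T}_m\to\mathbb{R}\text{ and constants }0<c<C\text{ with } c<v<C \text{ and } \Delta_\beta v+\lambda v\le0 \text{ on }\mathbb{T}_m\}$, $\lambda_1(\beta)=\sup\mathcal{A}_\beta$. *)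

theory Defs
  imports "HOL-Analysis.Analysis"
begin

text \<open>Vertices of the m-ary tree T_m: finite sequences over {0..m-1}, represented as lists.
  The root is the empty list, the successor (x,i) is x @ [i], the predecessor of x is butlast x,
  and the level |x| is length x.\<close>

definition tree :: "nat \<Rightarrow> nat list set" where
  "tree m = {x. \<forall>a \<in> set x. a < m}"

definition p_beta :: "real \<Rightarrow> real" where
  "p_beta \<beta> = \<beta> / (1 - \<beta>)"

definition Delta :: "nat \<Rightarrow> real \<Rightarrow> (nat list \<Rightarrow> real) \<Rightarrow> nat list \<Rightarrow> real" where
  "Delta m \<beta> u x =
     (if x = [] then (1 / real m) * (\<Sum>i<m. u [i]) - u []
      else (\<beta> * u (butlast x) + ((1 - \<beta>) / real m) * (\<Sum>i<m. u (x @ [i])) - u x)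
           * (p_beta \<beta>) powi (- int (length x)))"

definition branch :: "nat \<Rightarrow> (nat \<Rightarrow> nat list) \<Rightarrow> bool" where
  "branch m xs \<longleftrightarrow> xs 0 = [] \<and> (\<forall>n. \<exists>i<m. xs (Suc n) = xs n @ [i])"

definition is_eigenvalue :: "nat \<Rightarrow> real \<Rightarrow> real \<Rightarrow> bool" where
  "is_eigenvalue m \<beta> lam \<longleftrightarrow>
     (\<exists>u :: nat list \<Rightarrow> real.
        (\<exists>B. \<forall>x \<in> tree m. \<bar>u x\<bar> \<le> B) \<and>
        (\<exists>x \<in> tree m. u x \<noteq> 0) \<and>
        (\<forall>x \<in> tree m. - Delta m \<beta> u x = lam * u x) \<and>
        (\<forall>xs. branch m xs \<longrightarrow> (\<lambda>n. u (xs n)) \<longlonglongrightarrow> 0))"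

definition A_set :: "nat \<Rightarrow> real \<Rightarrow> real set" where
  "A_set m \<beta> = {lam. lam > 0 \<and>
     (\<exists>v :: nat list \<Rightarrow> real. \<exists>c C. 0 < c \<and> c < C \<and>
        (\<forall>x \<in> tree m. c < v x \<and> v x < C \<and> Delta m \<beta> v x + lam * v x \<le> 0))}"

definition lambda1 :: "nat \<Rightarrow> real \<Rightarrow> real" where
  "lambda1 m \<beta> = Sup (A_set m \<beta>)"

end

theory Submission
  imports Defs
begin

text \<open>
  Let \<open>u\<close> be an eigenfunction for \<open>\<lambda>\<close>, positive somewhere, and let \<open>a \<in> A\<^sub>\<beta>\<close> be witnessed
  by \<open>v\<close>, bounded between positive constants with \<open>\<Delta>v + a v \<le> 0\<close>. Put \<open>S = sup u/v > 0\<close>.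
  If \<open>\<lambda> < a\<close>, then \<open>t = S max(\<lambda>,0)/a < S\<close>, so \<open>w = t v - u\<close> takes some negative value \<open>w\<^sub>0\<close>,
  and \<open>\<Delta>w \<le> -t a v + \<lambda> u \<le> 0\<close> wherever \<open>w \<le> w\<^sub>0\<close>. A minimum principle on the tree then yields
  a whole branch along which eventually \<open>w \<le> w\<^sub>0 < 0\<close>, contradicting \<open>u \<rightarrow> 0\<close> along branches
  (as \<open>t v \<ge> 0\<close>). Hence every element of \<open>A\<^sub>\<beta>\<close> is at most \<open>\<lambda>\<close>; for \<open>\<beta> < 1/2\<close> the set \<open>A\<^sub>\<beta>\<close>
  is nonempty, witnessed by the radial function \<open>1 + (|x| + b) p\<^sub>\<beta>\<^bsup>|x|\<^esup>\<close>.
\<close>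

lemma branch_in_tree: "branch m xs \<Longrightarrow> xs n \<in> tree m"
proof (induction n)
  case 0
  then show ?case by (simp add: branch_def tree_def)
next
  case (Suc n)
  then obtain i where "i < m" "xs (Suc n) = xs n @ [i]"
    unfolding branch_def by blast
  with Suc show ?case by (auto simp: tree_def)
qed

lemma Delta_diff: "Delta m \<beta> (\<lambda>x. t * v x - u x) y = t * Delta m \<beta> v y - Delta m \<beta> u y"
  by (simp add: Delta_def sum_subtractf sum_distrib_left[symmetric] algebra_simps)

lemma Delta_uminus: "Delta m \<beta> (\<lambda>x. - u x) y = - Delta m \<beta> u y"
  by (simp add: Delta_def sum_negf algebra_simps)

lemma Delta_nonpos_imp_child_le:
  assumes "m \<ge> 1" "0 < \<beta>" "\<beta> < 1" and "Delta m \<beta> w z \<le> 0"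
    and "z \<noteq> [] \<longrightarrow> w z \<le> w (butlast z)"
  shows "\<exists>i<m. w (z @ [i]) \<le> w z"
proof -
  have avg: "(\<Sum>i<m. w (z @ [i])) / real m \<le> w z"
  proof (cases "z = []")
    case True
    then show ?thesis using assms(4) by (simp add: Delta_def)
  next
    case False
    have "p_beta \<beta> powi (- int (length z)) > 0"
      using assms(2,3) by (simp add: p_beta_def)
    then have "\<beta> * w (butlast z) + (1 - \<beta>) * ((\<Sum>i<m. w (z @ [i])) / real m) \<le> w z"
      using False assms(4) by (simp add: Delta_def mult_le_0_iff)
    moreover have "\<beta> * w z \<le> \<beta> * w (butlast z)"
      using False assms(2,5) by simp
    ultimately have "(1 - \<beta>) * ((\<Sum>i<m. w (z @ [i])) / real m) \<le> (1 - \<beta>) * w z"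
      by (simp add: algebra_simps)
    then show ?thesis
      by (rule mult_left_le_imp_le) (use assms(3) in simp)
  qed
  show ?thesis
  proof (rule ccontr)
    assume "\<not> ?thesis"
    then have "(\<Sum>i<m. w z) < (\<Sum>i<m. w (z @ [i]))"
      using assms(1) by (intro sum_strict_mono) (auto simp: not_le lessThan_empty_iff)
    then show False using avg assms(1) by (simp add: field_simps)
  qed
qed

lemma exists_sublevel_vertex_le_parent:
  fixes w :: "nat list \<Rightarrow> 'a::linorder"
  assumes "x \<in> tree m" "w x \<le> w0"
  shows "\<exists>y\<in>tree m. w y \<le> w0 \<and> (y \<noteq> [] \<longrightarrow> w y \<le> w (butlast y))"
  using assms
proof (induction x rule: rev_induct)
  case Nil
  then show ?case by blast
next
  case (snoc i x)
  show ?case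
  proof (cases "w (x @ [i]) \<le> w x")
    case True
    then show ?thesis using snoc.prems by force
  next
    case False
    then have "w x \<le> w0" using snoc.prems(2) by (meson order.trans linear)
    then show ?thesis using snoc.IH snoc.prems(1) by (simp add: tree_def)
  qed
qed

lemma exists_branch_through_extendable:
  assumes "y \<in> tree m" "P y" and extend: "\<And>z. P z \<Longrightarrow> \<exists>i<m. P (z @ [i])"
  shows "\<exists>xs. branch m xs \<and> (\<forall>n\<ge>length y. P (xs n))"
proof -
  define child where "child z = z @ [SOME i. i < m \<and> P (z @ [i])]" for z
  have child: "P (child z) \<and> (\<exists>i<m. child z = z @ [i])" if "P z" for z
    using someI_ex[of "\<lambda>i. i < m \<and> P (z @ [i])"] extend[OF that] by (auto simp: child_def)
  have P_iter: "P ((child ^^ k) y)" for k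
    by (induction k) (simp_all add: assms(2) child)
  define xs where "xs n = (if n \<le> length y then take n y else (child ^^ (n - length y)) y)" for n
  have xs_tail: "xs n = (child ^^ (n - length y)) y" if "length y \<le> n" for n
    using that by (auto simp: xs_def)
  have "branch m xs"
    unfolding branch_def
  proof (intro conjI allI)
    show "xs 0 = []" by (simp add: xs_def)
  next
    fix n
    show "\<exists>i<m. xs (Suc n) = xs n @ [i]"
    proof (cases "n < length y")
      case True
      then have "xs (Suc n) = xs n @ [y ! n]" by (simp add: xs_def take_Suc_conv_app_nth)
      moreover have "y ! n < m" using assms(1) True by (auto simp: tree_def)
      ultimately show ?thesis by blast
    next
      case False
      then have "xs (Suc n) = child (xs n)" "xs n = (child ^^ (n - length y)) y"
        by (simp_all add: xs_tail Suc_diff_le)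
      then show ?thesis using child[OF P_iter] by simp
    qed
  qed
  moreover have "P (xs n)" if "length y \<le> n" for n
    using that P_iter by (simp add: xs_tail)
  ultimately show ?thesis by blast
qed

lemma exists_branch_eventually_sublevel:
  assumes "m \<ge> 1" "0 < \<beta>" "\<beta> < 1"
    and superharmonic: "\<forall>x\<in>tree m. w x \<le> w0 \<longrightarrow> Delta m \<beta> w x \<le> 0"
    and "x0 \<in> tree m" "w x0 \<le> w0"
  shows "\<exists>xs N. branch m xs \<and> (\<forall>n\<ge>N. w (xs n) \<le> w0)"
proof -
  \<comment> \<open>As \<open>\<Delta>w \<le> 0\<close> on the sublevel set, every vertex satisfying \<open>P\<close> has a child
    satisfying \<open>P\<close>, so a branch can be grown through such vertices.\<close>
  define P where "P z \<longleftrightarrow> z \<in> tree m \<and> w z \<le> w0 \<and> (z \<noteq> [] \<longrightarrow> w z \<le> w (butlast z))" for z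
  obtain y where "P y"
    using exists_sublevel_vertex_le_parent[of x0 m w w0] assms(5,6) by (auto simp: P_def)
  have "\<exists>i<m. P (z @ [i])" if "P z" for z
  proof -
    have "Delta m \<beta> w z \<le> 0" "z \<noteq> [] \<longrightarrow> w z \<le> w (butlast z)"
      using that superharmonic by (simp_all add: P_def)
    then obtain i where "i < m" "w (z @ [i]) \<le> w z"
      using Delta_nonpos_imp_child_le[OF assms(1-3)] by blast
    then show ?thesis using that by (auto simp: P_def tree_def)
  qed
  then show ?thesis
    using exists_branch_through_extendable[of y m P] \<open>P y\<close> by (auto simp: P_def)
qed

lemma exists_sharp_ratio_bound:
  fixes u v :: "'a \<Rightarrow> real"
  assumes u_le: "\<forall>x\<in>T. u x \<le> B" and v_ge: "\<forall>x\<in>T. c \<le> v x" and "0 < c"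
    and "x1 \<in> T" "0 < u x1"
  shows "\<exists>S>0. (\<forall>x\<in>T. u x \<le> S * v x) \<and> (\<forall>t<S. \<exists>x\<in>T. t * v x < u x)"
proof -
  define S where "S = (SUP x\<in>T. u x / v x)"
  have v_pos: "0 < v x" if "x \<in> T" for x
    using v_ge \<open>0 < c\<close> that by force
  have bdd: "bdd_above ((\<lambda>x. u x / v x) ` T)"
  proof (rule bdd_aboveI2)
    fix x assume x: "x \<in> T"
    have "u x / v x \<le> max B 0 / v x"
      using u_le v_pos[OF x] x by (intro divide_right_mono) auto
    also have "\<dots> \<le> max B 0 / c"
      using v_ge v_pos x \<open>0 < c\<close> by (intro divide_left_mono) auto
    finally show "u x / v x \<le> max B 0 / c" .
  qed
  have ratio_le: "u x \<le> S * v x" if "x \<in> T" for x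
    using cSUP_upper[OF that bdd] v_pos[OF that] unfolding S_def by (simp add: divide_le_eq)
  have "0 < u x1 / v x1"
    using \<open>0 < u x1\<close> v_pos[OF \<open>x1 \<in> T\<close>] by simp
  also have "\<dots> \<le> S"
    using cSUP_upper[OF \<open>x1 \<in> T\<close> bdd] unfolding S_def .
  finally have "0 < S" .
  moreover have "\<exists>x\<in>T. t * v x < u x" if "t < S" for t
  proof -
    obtain x where "x \<in> T" "t < u x / v x"
      using \<open>t < S\<close> less_cSUP_iff[OF _ bdd] \<open>x1 \<in> T\<close> unfolding S_def by blast
    then show ?thesis using v_pos by (auto simp: less_divide_eq)
  qed
  ultimately show ?thesis using ratio_le by blast
qed

lemma Delta_radial_Nil:
  assumes "m \<ge> 1"
  shows "Delta m \<beta> (\<lambda>x. f (length x)) [] = f 1 - f 0"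
  using assms by (simp add: Delta_def)

lemma Delta_radial:
  assumes "m \<ge> 1" and "length x = Suc k"
  shows "Delta m \<beta> (\<lambda>x. f (length x)) x
    = (\<beta> * f k + (1 - \<beta>) * f (Suc (Suc k)) - f (Suc k)) * p_beta \<beta> powi - int (Suc k)"
  using assms by (auto simp: Delta_def)

lemma of_nat_mult_power_le:
  fixes p :: real
  assumes "0 \<le> p" "p < 1"
  shows "real k * p ^ k \<le> 1 / (1 - p)"
proof -
  have "real k * p ^ k = (\<Sum>j<k. p ^ k)" by simp
  also have "\<dots> \<le> (\<Sum>j<k. p ^ j)"
    by (rule sum_mono) (use assms in \<open>auto intro: power_decreasing\<close>)
  also have "\<dots> = (1 - p ^ k) / (1 - p)" using assms by (simp add: sum_gp_strict)
  also have "\<dots> \<le> 1 / (1 - p)" using assms by (simp add: divide_right_mono)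
  finally show ?thesis .
qed

lemma A_set_memI:
  assumes "0 < c" "0 < \<epsilon>"
    and "\<forall>x\<in>tree m. c \<le> v x \<and> v x \<le> C \<and> Delta m \<beta> v x \<le> - \<epsilon>"
  shows "\<epsilon> / C \<in> A_set m \<beta>"
proof -
  have "[] \<in> tree m" by (simp add: tree_def)
  then have "0 < C" using assms by force
  have "Delta m \<beta> v x + \<epsilon> / C * v x \<le> 0" if "x \<in> tree m" for x
  proof -
    have "\<epsilon> / C * v x \<le> \<epsilon> / C * C"
      using assms(2,3) \<open>0 < C\<close> that by (intro mult_left_mono) auto
    then show ?thesis using assms(3) \<open>0 < C\<close> that by force
  qed
  moreover have "c / 2 < v x \<and> v x < C + 1" if "x \<in> tree m" for x
    using assms(1,3) that by force
  moreover have "0 < c / 2" "c / 2 < C + 1" "0 < \<epsilon> / C"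
    using assms(1,2,3) \<open>0 < C\<close> \<open>[] \<in> tree m\<close> by force+
  ultimately show ?thesis
    unfolding A_set_def by blast
qed

lemma A_set_nonempty:
  assumes "m \<ge> 1" "0 < \<beta>" "\<beta> < 1 / 2"
  shows "A_set m \<beta> \<noteq> {}"
proof -
  define p where "p = p_beta \<beta>"
  have "0 < p" "p < 1" "(1 - \<beta>) * p = \<beta>"
    using assms(2,3) by (auto simp: p_def p_beta_def field_simps)
  define b where "b = 2 / (1 - p)"
  define f where "f k = 1 + (real k + b) * p ^ k" for k
  have "0 < b" using \<open>p < 1\<close> by (simp add: b_def)
  have f_bounds: "1 \<le> f k \<and> f k \<le> 1 + 1 / (1 - p) + b" for k
  proof -
    have "real k * p ^ k \<le> 1 / (1 - p)"
      using of_nat_mult_power_le \<open>0 < p\<close> \<open>p < 1\<close> by simp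
    moreover have "b * p ^ k \<le> b"
      using \<open>0 < b\<close> \<open>0 < p\<close> \<open>p < 1\<close> by (simp add: power_le_one)
    moreover have "0 \<le> real k * p ^ k" "0 \<le> b * p ^ k"
      using \<open>0 < b\<close> \<open>0 < p\<close> by simp_all
    ultimately show ?thesis
      unfolding f_def distrib_right by linarith
  qed
  have Delta_f: "Delta m \<beta> (\<lambda>x. f (length x)) x \<le> - (1 - 2 * \<beta>)" for x
  proof (cases x rule: rev_cases)
    case Nil
    have "f 1 - f 0 = p - b * (1 - p)"
      by (simp add: f_def algebra_simps)
    also have "\<dots> = p - 2"
      using \<open>p < 1\<close> by (simp add: b_def field_simps)
    finally have "f 1 - f 0 = p - 2" .
    then show ?thesis
      using Nil Delta_radial_Nil[OF assms(1)] \<open>p < 1\<close> assms(2) by simp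
  next
    case (snoc y i)
    define k where "k = length y"
    \<comment> \<open>\<open>p\<^sup>k\<close> solves the radial recursion, and \<open>k p\<^sup>k\<close> misses it by exactly \<open>(2\<beta> - 1) p\<^sup>k\<^sup>+\<^sup>1\<close>.\<close>
    have recursion_defect:
      "\<beta> * f k + (1 - \<beta>) * f (Suc (Suc k)) - f (Suc k) = (2 * \<beta> - 1) * p ^ Suc k"
    proof -
      have "\<beta> * f k + (1 - \<beta>) * f (Suc (Suc k)) - f (Suc k) - (2 * \<beta> - 1) * p ^ Suc k
          = ((1 - \<beta>) * p - \<beta>) * (p ^ k * (real k + b) * (p - 1) + 2 * p * p ^ k)"
        unfolding f_def by (simp add: algebra_simps)
      then show ?thesis using \<open>(1 - \<beta>) * p = \<beta>\<close> by simp
    qed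
    have "Delta m \<beta> (\<lambda>x. f (length x)) x
        = (\<beta> * f k + (1 - \<beta>) * f (Suc (Suc k)) - f (Suc k)) * p powi - int (Suc k)"
      using Delta_radial[OF assms(1)] snoc by (simp add: k_def p_def)
    also have "\<dots> = (2 * \<beta> - 1) * (p ^ Suc k * p powi - int (Suc k))"
      by (simp add: recursion_defect)
    also have "p ^ Suc k * p powi - int (Suc k) = 1"
      unfolding power_int_minus power_int_of_nat using \<open>0 < p\<close> by (intro right_inverse) simp
    finally show ?thesis by simp
  qed
  have "(1 - 2 * \<beta>) / (1 + 1 / (1 - p) + b) \<in> A_set m \<beta>"
    using f_bounds Delta_f assms(3) by (intro A_set_memI[where v = "\<lambda>x. f (length x)" and c = 1]) auto
  then show ?thesis by blast
qed

lemma is_eigenvalue_positive_eigenfunction: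
  assumes "is_eigenvalue m \<beta> lam"
  obtains u B x1 where "\<forall>x\<in>tree m. u x \<le> B" "x1 \<in> tree m" "0 < u x1"
    "\<forall>x\<in>tree m. - Delta m \<beta> u x = lam * u x"
    "\<forall>xs. branch m xs \<longrightarrow> (\<lambda>n. u (xs n)) \<longlonglongrightarrow> 0"
proof -
  obtain u B x1 where bounded: "\<forall>x\<in>tree m. \<bar>u x\<bar> \<le> B" and "x1 \<in> tree m" "u x1 \<noteq> 0"
    and eigen: "\<forall>x\<in>tree m. - Delta m \<beta> u x = lam * u x"
    and decay: "\<forall>xs. branch m xs \<longrightarrow> (\<lambda>n. u (xs n)) \<longlonglongrightarrow> 0"
    using assms unfolding is_eigenvalue_def by blast
  have u_le: "\<forall>x\<in>tree m. u x \<le> B" and minus_u_le: "\<forall>x\<in>tree m. - u x \<le> B"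
    using bounded by (auto simp: abs_le_iff)
  show thesis
  proof (cases "0 < u x1")
    case True
    show thesis by (rule that[OF u_le \<open>x1 \<in> tree m\<close> True eigen decay])
  next
    case False
    then have "0 < - u x1" using \<open>u x1 \<noteq> 0\<close> by simp
    moreover have "\<forall>x\<in>tree m. - Delta m \<beta> (\<lambda>x. - u x) x = lam * - u x"
      using eigen by (simp add: Delta_uminus)
    moreover have "\<forall>xs. branch m xs \<longrightarrow> (\<lambda>n. - u (xs n)) \<longlonglongrightarrow> 0"
      using decay tendsto_minus[of _ 0] by fastforce
    ultimately show thesis by (rule that[OF minus_u_le \<open>x1 \<in> tree m\<close>])
  qed
qed

lemma A_set_le_eigenvalue:
  assumes "m \<ge> 1" "0 < \<beta>" "\<beta> < 1"
    and "is_eigenvalue m \<beta> lam" and "a \<in> A_set m \<beta>"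
  shows "a \<le> lam"
proof (rule ccontr)
  assume "\<not> a \<le> lam"
  obtain u B x1 where u_le: "\<forall>x\<in>tree m. u x \<le> B" and "x1 \<in> tree m" "0 < u x1"
    and eigen: "\<forall>x\<in>tree m. - Delta m \<beta> u x = lam * u x"
    and decay: "\<forall>xs. branch m xs \<longrightarrow> (\<lambda>n. u (xs n)) \<longlonglongrightarrow> 0"
    using is_eigenvalue_positive_eigenfunction[OF assms(4)] by blast
  obtain v c C where "0 < a" "0 < c"
    and v: "\<forall>x\<in>tree m. c < v x \<and> v x < C \<and> Delta m \<beta> v x + a * v x \<le> 0"
    using assms(5) unfolding A_set_def by blast
  have v_ge: "\<forall>x\<in>tree m. c \<le> v x"
    using v by auto
  have v_pos: "0 < v x" if "x \<in> tree m" for x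
    using v_ge \<open>0 < c\<close> that by force
  obtain S where "0 < S" and u_le_S: "\<forall>x\<in>tree m. u x \<le> S * v x"
    and approx: "\<forall>t<S. \<exists>x\<in>tree m. t * v x < u x"
    using exists_sharp_ratio_bound[OF u_le v_ge \<open>0 < c\<close> \<open>x1 \<in> tree m\<close> \<open>0 < u x1\<close>] by blast
  define t where "t = S * max lam 0 / a"
  have "0 \<le> t" "t * a = S * max lam 0"
    using \<open>0 < S\<close> \<open>0 < a\<close> by (simp_all add: t_def)
  moreover have "t < S"
    using \<open>0 < S\<close> \<open>0 < a\<close> \<open>\<not> a \<le> lam\<close> by (simp add: t_def field_simps)
  then obtain x0 where "x0 \<in> tree m" "t * v x0 < u x0"
    using approx by blast
  define w where "w x = t * v x - u x" for x
  have "w x0 < 0" using \<open>t * v x0 < u x0\<close> by (simp add: w_def)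
  have "Delta m \<beta> w x \<le> 0" if "x \<in> tree m" "w x \<le> w x0" for x
  proof -
    have "0 \<le> t * v x"
      using \<open>0 \<le> t\<close> v_pos[OF that(1)] by simp
    then have "0 \<le> u x"
      using that(2) \<open>w x0 < 0\<close> unfolding w_def by linarith
    have "Delta m \<beta> w x = t * Delta m \<beta> v x - Delta m \<beta> u x"
      unfolding w_def by (rule Delta_diff)
    also have "\<dots> = t * Delta m \<beta> v x + lam * u x"
      using eigen that(1) by simp
    also have "\<dots> \<le> t * (- a * v x) + max lam 0 * u x"
      using v that(1) \<open>0 \<le> t\<close> \<open>0 \<le> u x\<close> by (intro add_mono mult_left_mono mult_right_mono) auto
    also have "\<dots> \<le> t * (- a * v x) + max lam 0 * (S * v x)"
      using u_le_S that(1) by (intro add_left_mono mult_left_mono) auto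
    also have "\<dots> = 0"
      using \<open>t * a = S * max lam 0\<close> by (simp add: algebra_simps)
    finally show ?thesis .
  qed
  then obtain xs N where "branch m xs" and sublevel: "\<forall>n\<ge>N. w (xs n) \<le> w x0"
    using exists_branch_eventually_sublevel[OF assms(1-3)] \<open>x0 \<in> tree m\<close> by blast
  then have "(\<lambda>n. u (xs n)) \<longlonglongrightarrow> 0" using decay by blast
  then have "\<forall>\<^sub>F n in sequentially. u (xs n) < - w x0"
    using \<open>w x0 < 0\<close> by (intro order_tendstoD(2)) auto
  then obtain M where "\<forall>n\<ge>M. u (xs n) < - w x0"
    unfolding eventually_sequentially by blast
  then have "u (xs (max M N)) < - w x0" "w (xs (max M N)) \<le> w x0"
    using sublevel by simp_all
  moreover have "0 \<le> t * v (xs (max M N))"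
    using \<open>0 \<le> t\<close> v_pos[OF branch_in_tree[OF \<open>branch m xs\<close>]]
    by (meson less_imp_le mult_nonneg_nonneg)
  ultimately show False
    unfolding w_def by linarith
qed

theorem corollary5p3:
  fixes m :: nat and \<beta> lam :: real
  assumes "m \<ge> 2" and "0 < \<beta>" and "\<beta> < 1 / 2"
    and "is_eigenvalue m \<beta> lam"
  shows "lam \<ge> lambda1 m \<beta>"
proof -
  have "m \<ge> 1" using assms(1) by simp
  then have "A_set m \<beta> \<noteq> {}" and "\<forall>a\<in>A_set m \<beta>. a \<le> lam"
    using A_set_nonempty A_set_le_eigenvalue assms(2-4) by auto
  then show ?thesis
    unfolding lambda1_def by (intro cSup_least) auto
qed

end
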